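(* Let $(X,f)$ be a dynamical system. Then (1) $(X,f)$ is weakly mixing if and only if it is $\nabla(\mathcal{F}_t)$-point transitive; (2) $(X,f)$ is strongly mixing if and only if it is $\nabla(\mathcal{F}_{cf})$-point transitive.
   Context: A dynamical system is a pair $(X,f)$ with $X$ a compact metric space and $f:X\to X$ continuous. $\mathbb{N}=\{1,2,\dots\}$. For $U,V\subset X$ and $x\in X$: $N(U,V)=\{n\in\mathbb{N}: U\cap f^{-n}(V)\neq\emptyset\}$ and $N(x,U)=\{n\in\mathbb{N}: f^n(x)\in U\}$. $(X,f)$ is weakly mixing if $(X\times X,f\times f)$ is transitive (i.e. hitting time sets of non-empty open sets are non-empty), and strongly mixing if $N(U,V)$ is cofinite for all non-empty open $U,V\subset X$. $\mathcal{F}_t$ is the family of thick sets: $F\subset\mathbb{N}$ such that for every $n$ there is $a\in\mathbb{N}$ with $\{a,a+1,\dots,a+n\}\subset F$. $\mathcal{F}_{cf}$ is the family of cofinite subsets of $\mathbb{N}$. For a family $\mathcal{F}$ of subsets of $\mathbb{N}$, a point $x$ is an $\mathcal{F}$-transitive point if $N(x,U)\in\mathcal{F}$ for every non-empty open $U\subset X$, and $(X,f)$ is $\mathcal{F}$-point transitive if such a point exists. For $F\subset\mathbb{N}$, $F-F=\{a-b: a,b\in F,\ a>b\}$, and $\nabla(\mathcal{F})=\{F\subset\mathbb{N}: F-F\in\mathcal{F}\}$. *)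

theory Defs
  imports "HOL-Analysis.Analysis"
begin

definition posnat :: "nat set" where
  "posnat = {n. 1 \<le> n}"

definition hit_UV :: "('a \<Rightarrow> 'a) \<Rightarrow> 'a set \<Rightarrow> 'a set \<Rightarrow> nat set" where
  "hit_UV f U V = {n. 1 \<le> n \<and> (\<exists>x\<in>U. (f ^^ n) x \<in> V)}"

definition hit_xU :: "('a \<Rightarrow> 'a) \<Rightarrow> 'a \<Rightarrow> 'a set \<Rightarrow> nat set" where
  "hit_xU f x U = {n. 1 \<le> n \<and> (f ^^ n) x \<in> U}"

definition top_transitive :: "'a::topological_space set \<Rightarrow> ('a \<Rightarrow> 'a) \<Rightarrow> bool" where
  "top_transitive S g \<longleftrightarrow>
     (\<forall>U V. openin (top_of_set S) U \<and> U \<noteq> {} \<and> openin (top_of_set S) V \<and> V \<noteq> {}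
        \<longrightarrow> hit_UV g U V \<noteq> {})"

definition weakly_mixing :: "'a::topological_space set \<Rightarrow> ('a \<Rightarrow> 'a) \<Rightarrow> bool" where
  "weakly_mixing X f \<longleftrightarrow> top_transitive (X \<times> X) (\<lambda>(x, y). (f x, f y))"

definition thick_family :: "nat set set" where
  "thick_family = {F. F \<subseteq> posnat \<and> (\<forall>n. \<exists>a\<in>posnat. {a..a+n} \<subseteq> F)}"

definition cofinite_family :: "nat set set" where
  "cofinite_family = {F. F \<subseteq> posnat \<and> finite (posnat - F)}"

definition strongly_mixing :: "'a::topological_space set \<Rightarrow> ('a \<Rightarrow> 'a) \<Rightarrow> bool" where
  "strongly_mixing X f \<longleftrightarrow>
     (\<forall>U V. openin (top_of_set X) U \<and> U \<noteq> {} \<and> openin (top_of_set X) V \<and> V \<noteq> {}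
        \<longrightarrow> hit_UV f U V \<in> cofinite_family)"

definition diff_set :: "nat set \<Rightarrow> nat set" where
  "diff_set F = {a - b | a b. a \<in> F \<and> b \<in> F \<and> a > b}"

definition nabla :: "nat set set \<Rightarrow> nat set set" where
  "nabla Fam = {F. F \<subseteq> posnat \<and> diff_set F \<in> Fam}"

definition F_transitive_point :: "'a::topological_space set \<Rightarrow> ('a \<Rightarrow> 'a) \<Rightarrow> nat set set \<Rightarrow> 'a \<Rightarrow> bool" where
  "F_transitive_point X f Fam x \<longleftrightarrow>
     (\<forall>U. openin (top_of_set X) U \<and> U \<noteq> {} \<longrightarrow> hit_xU f x U \<in> Fam)"

definition F_point_transitive :: "'a::topological_space set \<Rightarrow> ('a \<Rightarrow> 'a) \<Rightarrow> nat set set \<Rightarrow> bool" where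
  "F_point_transitive X f Fam \<longleftrightarrow> (\<exists>x\<in>X. F_transitive_point X f Fam x)"

end

theory Submission
  imports Defs
begin

(* Fix a countable family of nonempty open sets such that every nonempty open set contains
   one of them. For B in the family and n \<in> N(B,B), the points x with f^d x \<in> B and
   f^(d+n) x \<in> B for some d \<ge> 1 form an open set, dense by transitivity; by Baire some x lies
   in all of them, and then N(B,B) \<subseteq> N(x,U) - N(x,U) whenever B \<subseteq> U. Weak mixing makes
   N(B,B) thick (Furstenberg), strong mixing makes it cofinite.
   Conversely, if f^a x \<in> U and f^b x \<in> V with a < b, then N(x,W) - N(x,W) + (b - a) \<subseteq> N(U,V)
   for the neighbourhood W = f^-a(U) \<inter> f^-b(V) of x. A translate of a cofinite set is cofinite,
   and two translates of one thick set share an element, so the hitting time sets of two pairs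
   of nonempty open sets always intersect, which is transitivity of f \<times> f. *)

lemma funpow_apply_funpow: "(f ^^ m) ((f ^^ n) x) = (f ^^ (m + n)) x"
  by (simp add: funpow_add)

lemma hit_UV_subset_posnat: "hit_UV f U V \<subseteq> posnat"
  unfolding hit_UV_def posnat_def by auto

lemma hit_xU_subset_posnat: "hit_xU f x U \<subseteq> posnat"
  unfolding hit_xU_def posnat_def by auto

lemma diff_set_subset_posnat: "diff_set F \<subseteq> posnat"
  unfolding diff_set_def posnat_def by auto

lemma diff_set_mono: "F \<subseteq> G \<Longrightarrow> diff_set F \<subseteq> diff_set G"
  unfolding diff_set_def by blast

lemma finite_diff_set:
  assumes "finite F"
  shows "finite (diff_set F)"
proof -
  have "diff_set F \<subseteq> (\<lambda>(a, b). a - b) ` (F \<times> F)"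
    unfolding diff_set_def by auto
  then show ?thesis
    using assms finite_subset by blast
qed

lemma infinite_posnat: "infinite posnat"
proof -
  have "posnat = {1..}" unfolding posnat_def by auto
  then show ?thesis using infinite_Ici by metis
qed

lemma thick_family_infinite: "T \<in> thick_family \<Longrightarrow> infinite T"
proof
  assume "T \<in> thick_family" "finite T"
  then obtain M where M: "T \<subseteq> {..<M}" using finite_nat_bounded by blast
  obtain a where "{a..a + M} \<subseteq> T"
    using \<open>T \<in> thick_family\<close> unfolding thick_family_def by blast
  then have "a + M \<in> T" by auto
  then have "a + M < M" using M by auto
  then show False by simp
qed

lemma cofinite_family_infinite: "T \<in> cofinite_family \<Longrightarrow> infinite T"
proof
  assume "T \<in> cofinite_family" "finite T"
  then have "finite ((posnat - T) \<union> T)" unfolding cofinite_family_def by blast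
  moreover have "posnat \<subseteq> (posnat - T) \<union> T" by blast
  ultimately show False using infinite_posnat finite_subset by blast
qed

lemma thick_family_mono: "S \<in> thick_family \<Longrightarrow> S \<subseteq> T \<Longrightarrow> T \<subseteq> posnat \<Longrightarrow> T \<in> thick_family"
  unfolding thick_family_def by blast

lemma cofinite_family_mono: "S \<in> cofinite_family \<Longrightarrow> S \<subseteq> T \<Longrightarrow> T \<subseteq> posnat \<Longrightarrow> T \<in> cofinite_family"
  unfolding cofinite_family_def by (metis Diff_mono finite_subset mem_Collect_eq order_refl)

lemma thick_family_common_translate:
  assumes "T \<in> thick_family"
  obtains m where "m + p \<in> T" "m + q \<in> T"
proof -
  obtain a where "{a..a + (p + q)} \<subseteq> T"
    using assms unfolding thick_family_def by blast
  then show thesis by (intro that[of a]) auto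
qed

lemma cofinite_family_translate:
  assumes "S \<in> cofinite_family" "T \<subseteq> posnat" "\<And>n. n \<in> S \<Longrightarrow> n + c \<in> T"
  shows "T \<in> cofinite_family"
proof -
  have "posnat - T \<subseteq> {..c} \<union> (\<lambda>n. n + c) ` (posnat - S)"
  proof
    fix k assume k: "k \<in> posnat - T"
    show "k \<in> {..c} \<union> (\<lambda>n. n + c) ` (posnat - S)"
    proof (cases "k \<le> c")
      case False
      then have "k - c \<in> posnat - S" "k = k - c + c"
        using k assms(3)[of "k - c"] unfolding posnat_def by auto
      then show ?thesis by (metis UnI2 image_eqI)
    qed simp
  qed
  moreover have "finite ({..c} \<union> (\<lambda>n. n + c) ` (posnat - S))"
    using assms(1) unfolding cofinite_family_def by simp
  ultimately show ?thesis
    using assms(2) unfolding cofinite_family_def by (simp add: finite_subset)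
qed

lemma hit_UV_add:
  assumes "n \<in> hit_UV f U W" "\<And>y. y \<in> W \<Longrightarrow> (f ^^ k) y \<in> V"
  shows "n + k \<in> hit_UV f U V"
  using assms unfolding hit_UV_def by (force simp: funpow_apply_funpow add.commute)

lemma funpow_product:
  fixes f :: "'a \<Rightarrow> 'a"
  shows "((\<lambda>(x, y). (f x, f y)) ^^ n) (a, b) = ((f ^^ n) a, (f ^^ n) b)"
  by (induction n) auto

lemma hit_UV_product:
  "hit_UV (\<lambda>(x, y). (f x, f y)) (U1 \<times> U2) (V1 \<times> V2) = hit_UV f U1 V1 \<inter> hit_UV f U2 V2"
  unfolding hit_UV_def by (auto simp: funpow_product)

lemma hit_UV_mono: "U \<subseteq> U' \<Longrightarrow> V \<subseteq> V' \<Longrightarrow> hit_UV f U V \<subseteq> hit_UV f U' V'"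
  unfolding hit_UV_def by auto

lemma hit_xU_mono: "U \<subseteq> V \<Longrightarrow> hit_xU f x U \<subseteq> hit_xU f x V"
  unfolding hit_xU_def by auto

lemma openin_product_contains_box:
  assumes "openin (top_of_set (S \<times> T)) W" "W \<noteq> {}"
  obtains U V where "openin (top_of_set S) U" "openin (top_of_set T) V" "U \<noteq> {}" "V \<noteq> {}"
    "U \<times> V \<subseteq> W"
proof -
  obtain G where G: "open G" "W = (S \<times> T) \<inter> G" using assms(1) by (auto simp: openin_open)
  obtain p q where pq: "(p, q) \<in> W" using assms(2) by auto
  then obtain A B where AB: "open A" "open B" "(p, q) \<in> A \<times> B" "A \<times> B \<subseteq> G"
    using G open_prod_elim[of G "(p, q)"] by auto
  show thesis
  proof (rule that[of "S \<inter> A" "T \<inter> B"])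
    show "openin (top_of_set S) (S \<inter> A)" "openin (top_of_set T) (T \<inter> B)"
      using AB by (auto simp: openin_open_Int)
    show "S \<inter> A \<noteq> {}" "T \<inter> B \<noteq> {}" "(S \<inter> A) \<times> (T \<inter> B) \<subseteq> W" using pq G AB by auto
  qed
qed

lemma compact_countable_pi_base:
  fixes X :: "'a::metric_space set"
  assumes "compact X"
  obtains \<B> where "countable \<B>" "\<And>B. B \<in> \<B> \<Longrightarrow> openin (top_of_set X) B \<and> B \<noteq> {}"
    "\<And>U. openin (top_of_set X) U \<Longrightarrow> U \<noteq> {} \<Longrightarrow> \<exists>B \<in> \<B>. B \<subseteq> U"
proof -
  have "\<exists>E. finite E \<and> E \<subseteq> X \<and> X \<subseteq> (\<Union>e \<in> E. ball e (inverse (Suc k)))" for k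
  proof -
    have "X \<subseteq> (\<Union>e \<in> X. ball e (inverse (Suc k)))" by (auto intro!: bexI)
    then show ?thesis
      using compactE_image[OF assms, of X "\<lambda>e. ball e (inverse (Suc k))"] by (metis open_ball)
  qed
  then obtain E where E: "\<And>k. finite (E k)" "\<And>k. E k \<subseteq> X"
    "\<And>k. X \<subseteq> (\<Union>e \<in> E k. ball e (inverse (Suc k)))"
    by metis
  define \<B> where "\<B> = (\<Union>k. (\<lambda>e. X \<inter> ball e (inverse (Suc k))) ` E k)"
  show thesis
  proof (rule that)
    show "countable \<B>" unfolding \<B>_def using E(1) by (simp add: countable_finite)
    show "openin (top_of_set X) B \<and> B \<noteq> {}" if B: "B \<in> \<B>" for B
    proof -
      obtain k e where "e \<in> E k" "B = X \<inter> ball e (inverse (Suc k))"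
        using B unfolding \<B>_def by blast
      moreover have "e \<in> X" using E(2) \<open>e \<in> E k\<close> by blast
      ultimately show ?thesis by (auto simp: openin_open_Int)
    qed
  next
    fix U assume "openin (top_of_set X) U" "U \<noteq> {}"
    then obtain p W where pW: "p \<in> U" "open W" "U = X \<inter> W" by (auto simp: openin_open)
    then obtain r where r: "r > 0" "ball p r \<subseteq> W" using open_contains_ball by blast
    obtain k where k: "inverse (real (Suc k)) < r / 2" using reals_Archimedean[of "r / 2"] r by auto
    obtain e where e: "e \<in> E k" "p \<in> ball e (inverse (Suc k))" using E(3)[of k] pW by auto
    have "X \<inter> ball e (inverse (Suc k)) \<subseteq> U"
    proof
      fix y assume "y \<in> X \<inter> ball e (inverse (Suc k))"
      then have "y \<in> X" "dist p y < r"
        using e k dist_triangle[of p y e] by (auto simp: dist_commute)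
      then show "y \<in> U" using r pW by auto
    qed
    then show "\<exists>B \<in> \<B>. B \<subseteq> U" using e unfolding \<B>_def by blast
  qed
qed

lemma compact_Inter_dense_openin_nonempty:
  fixes X :: "'a::metric_space set"
  assumes "compact X" "X \<noteq> {}" "countable \<G>"
    and openin: "\<And>G. G \<in> \<G> \<Longrightarrow> openin (top_of_set X) G"
    and dense: "\<And>G U. G \<in> \<G> \<Longrightarrow> openin (top_of_set X) U \<Longrightarrow> U \<noteq> {} \<Longrightarrow> G \<inter> U \<noteq> {}"
  shows "X \<inter> \<Inter>\<G> \<noteq> {}"
proof -
  have "top_of_set X closure_of \<Inter>\<G> = topspace (top_of_set X)"
  proof (rule Baire_category)
    have "compact_space (top_of_set X)" "Hausdorff_space (top_of_set X)"
      using assms(1) by (simp_all add: compact_space_subtopology Hausdorff_space_subtopology)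
    then show "completely_metrizable_space (top_of_set X) \<or>
      locally_compact_space (top_of_set X) \<and> regular_space (top_of_set X)"
      using compact_imp_locally_compact_space compact_Hausdorff_imp_regular_space by blast
    show "openin (top_of_set X) G \<and> top_of_set X closure_of G = topspace (top_of_set X)"
      if "G \<in> \<G>" for G
      unfolding dense_intersects_open using that openin dense by auto
  qed (rule assms(3))
  then show ?thesis
    using assms(2) by (metis closure_of_empty closure_of_restrict topspace_euclidean_subtopology)
qed

locale dynamical_system =
  fixes X :: "'a::metric_space set" and f :: "'a \<Rightarrow> 'a"
  assumes continuous: "continuous_on X f" and maps_to: "f ` X \<subseteq> X"
begin

abbreviation nonempty_open :: "'a set \<Rightarrow> bool" where
  "nonempty_open U \<equiv> openin (top_of_set X) U \<and> U \<noteq> {}"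

lemma funpow_in: "x \<in> X \<Longrightarrow> (f ^^ n) x \<in> X"
  using maps_to by (induction n) auto

lemma continuous_on_funpow: "continuous_on X (f ^^ n)"
proof (induction n)
  case (Suc n)
  have "continuous_on X (f \<circ> (f ^^ n))"
    by (rule continuous_on_compose[OF Suc continuous_on_subset[OF continuous]])
      (auto intro: funpow_in)
  then show ?case by simp
qed simp

lemma openin_funpow_preimage:
  assumes "openin (top_of_set X) U"
  shows "openin (top_of_set X) {y \<in> X. (f ^^ n) y \<in> U}"
proof -
  have "openin (top_of_set X) (X \<inter> (f ^^ n) -` U)"
    by (rule continuous_openin_preimage[OF continuous_on_funpow _ assms]) (auto intro: funpow_in)
  then show ?thesis by (simp add: Int_def)
qed

lemma transitive_funpow_preimage_nonempty:
  assumes "top_transitive X f" "nonempty_open V"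
  shows "{y \<in> X. (f ^^ n) y \<in> V} \<noteq> {}"
proof (induction n)
  case 0
  then show ?case using assms(2) openin_subset by fastforce
next
  case (Suc n)
  have "nonempty_open X" using assms(2) openin_subset by auto
  moreover have "nonempty_open {y \<in> X. (f ^^ n) y \<in> V}"
    using Suc assms(2) openin_funpow_preimage by blast
  ultimately obtain t where "t \<in> hit_UV f X {y \<in> X. (f ^^ n) y \<in> V}"
    using assms(1) unfolding top_transitive_def by blast
  then obtain y where y: "y \<in> X" "t \<ge> 1" "(f ^^ n) ((f ^^ t) y) \<in> V"
    unfolding hit_UV_def by blast
  have "(f ^^ Suc n) ((f ^^ (t - 1)) y) = (f ^^ (Suc n + (t - 1))) y"
    by (rule funpow_apply_funpow)
  also have "Suc n + (t - 1) = n + t" using y(2) by simp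
  also have "(f ^^ (n + t)) y = (f ^^ n) ((f ^^ t) y)" by (simp add: funpow_apply_funpow)
  finally have "(f ^^ Suc n) ((f ^^ (t - 1)) y) = (f ^^ n) ((f ^^ t) y)" .
  then have "(f ^^ (t - 1)) y \<in> {y \<in> X. (f ^^ Suc n) y \<in> V}"
    using y by (simp add: funpow_in)
  then show ?case by blast
qed

lemma weakly_mixingD:
  assumes "weakly_mixing X f" "nonempty_open U1" "nonempty_open V1" "nonempty_open U2" "nonempty_open V2"
  shows "hit_UV f U1 V1 \<inter> hit_UV f U2 V2 \<noteq> {}"
proof -
  have "openin (top_of_set (X \<times> X)) (U1 \<times> U2)" "openin (top_of_set (X \<times> X)) (V1 \<times> V2)"
    using assms(2-5) by (simp_all add: openin_Times)
  moreover have "U1 \<times> U2 \<noteq> {}" "V1 \<times> V2 \<noteq> {}" using assms(2-5) by simp_all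
  ultimately have "hit_UV (\<lambda>(x, y). (f x, f y)) (U1 \<times> U2) (V1 \<times> V2) \<noteq> {}"
    using assms(1) unfolding weakly_mixing_def top_transitive_def by blast
  then show ?thesis by (simp add: hit_UV_product)
qed

lemma weakly_mixingI:
  assumes "\<And>U1 V1 U2 V2. nonempty_open U1 \<Longrightarrow> nonempty_open V1 \<Longrightarrow> nonempty_open U2 \<Longrightarrow>
    nonempty_open V2 \<Longrightarrow> hit_UV f U1 V1 \<inter> hit_UV f U2 V2 \<noteq> {}"
  shows "weakly_mixing X f"
  unfolding weakly_mixing_def top_transitive_def
proof (intro allI impI, elim conjE)
  fix U V assume "openin (top_of_set (X \<times> X)) U" "U \<noteq> {}" "openin (top_of_set (X \<times> X)) V" "V \<noteq> {}"
  moreover obtain U1 U2 where U: "nonempty_open U1" "nonempty_open U2" "U1 \<times> U2 \<subseteq> U"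
    by (rule openin_product_contains_box[OF calculation(1,2)]) blast
  moreover obtain V1 V2 where V: "nonempty_open V1" "nonempty_open V2" "V1 \<times> V2 \<subseteq> V"
    by (rule openin_product_contains_box[OF calculation(3,4)]) blast
  have "hit_UV (\<lambda>(x, y). (f x, f y)) (U1 \<times> U2) (V1 \<times> V2) \<noteq> {}"
    using assms[OF U(1) V(1) U(2) V(2)] by (simp add: hit_UV_product)
  then show "hit_UV (\<lambda>(x, y). (f x, f y)) U V \<noteq> {}"
    using hit_UV_mono[OF U(3) V(3)] by blast
qed

lemma weakly_mixing_imp_transitive:
  assumes "weakly_mixing X f" shows "top_transitive X f"
  unfolding top_transitive_def
proof (intro allI impI, elim conjE)
  fix U V assume "openin (top_of_set X) U" "U \<noteq> {}" "openin (top_of_set X) V" "V \<noteq> {}"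
  then show "hit_UV f U V \<noteq> {}" using weakly_mixingD[OF assms, of U V U V] by simp
qed

lemma strongly_mixing_imp_transitive:
  assumes "strongly_mixing X f" shows "top_transitive X f"
  unfolding top_transitive_def
proof (intro allI impI)
  fix U V assume "openin (top_of_set X) U \<and> U \<noteq> {} \<and> openin (top_of_set X) V \<and> V \<noteq> {}"
  then have "infinite (hit_UV f U V)"
    using assms cofinite_family_infinite unfolding strongly_mixing_def by blast
  then show "hit_UV f U V \<noteq> {}" by auto
qed

(* Furstenberg's intersection lemma: pull U2 and V2 back along a common hitting time k of
   (U1, U2) and (V1, V2). *)
lemma weakly_mixing_hit_UV_Int:
  assumes "weakly_mixing X f" "nonempty_open U1" "nonempty_open V1" "nonempty_open U2" "nonempty_open V2"
  obtains U V where "nonempty_open U" "nonempty_open V"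
    "hit_UV f U V \<subseteq> hit_UV f U1 V1 \<inter> hit_UV f U2 V2"
proof -
  obtain k where k: "k \<in> hit_UV f U1 U2" "k \<in> hit_UV f V1 V2"
    using weakly_mixingD[OF assms(1,2,4,3,5)] by blast
  define U where "U = U1 \<inter> {y \<in> X. (f ^^ k) y \<in> U2}"
  define V where "V = V1 \<inter> {y \<in> X. (f ^^ k) y \<in> V2}"
  have "openin (top_of_set X) U" "openin (top_of_set X) V"
    unfolding U_def V_def using assms(2-5) openin_funpow_preimage by blast+
  moreover have "U \<noteq> {}" "V \<noteq> {}"
    using k openin_subset[of "top_of_set X" U1] openin_subset[of "top_of_set X" V1] assms(2,3)
    unfolding U_def V_def hit_UV_def by auto
  moreover have "hit_UV f U V \<subseteq> hit_UV f U1 V1 \<inter> hit_UV f U2 V2"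
  proof
    fix n assume "n \<in> hit_UV f U V"
    then obtain y where y: "n \<ge> 1" "y \<in> U" "(f ^^ n) y \<in> V" unfolding hit_UV_def by blast
    have "(f ^^ n) ((f ^^ k) y) = (f ^^ k) ((f ^^ n) y)"
      by (simp add: funpow_apply_funpow add.commute)
    then have "y \<in> U1" "(f ^^ n) y \<in> V1" "(f ^^ k) y \<in> U2" "(f ^^ n) ((f ^^ k) y) \<in> V2"
      using y unfolding U_def V_def by auto
    then show "n \<in> hit_UV f U1 V1 \<inter> hit_UV f U2 V2"
      using y(1) unfolding hit_UV_def by blast
  qed
  ultimately show thesis using that by blast
qed

lemma weakly_mixing_hit_UV_intervals:
  assumes "weakly_mixing X f" "nonempty_open U" "nonempty_open V"
  obtains U' V' where "nonempty_open U'" "nonempty_open V'"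
    "\<And>n. n \<in> hit_UV f U' V' \<Longrightarrow> {n..n + L} \<subseteq> hit_UV f U V"
proof -
  have "\<exists>U' V'. nonempty_open U' \<and> nonempty_open V' \<and>
    (\<forall>n \<in> hit_UV f U' V'. {n..n + L} \<subseteq> hit_UV f U V)"
  proof (induction L)
    case 0
    show ?case using assms(2,3) by auto
  next
    case (Suc L)
    then obtain U' V' where UV': "nonempty_open U'" "nonempty_open V'"
      and intervals: "\<forall>n \<in> hit_UV f U' V'. {n..n + L} \<subseteq> hit_UV f U V"
      by blast
    define P where "P = {y \<in> X. (f ^^ Suc L) y \<in> V}"
    have P: "nonempty_open P"
      unfolding P_def using assms openin_funpow_preimage
        transitive_funpow_preimage_nonempty[OF weakly_mixing_imp_transitive] by blast
    obtain U'' V'' where UV'': "nonempty_open U''" "nonempty_open V''"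
      and sub: "hit_UV f U'' V'' \<subseteq> hit_UV f U' V' \<inter> hit_UV f U P"
      by (rule weakly_mixing_hit_UV_Int[OF assms(1) UV' assms(2) P])
    have "{n..n + Suc L} \<subseteq> hit_UV f U V" if n: "n \<in> hit_UV f U'' V''" for n
    proof -
      have "{n..n + L} \<subseteq> hit_UV f U V" using intervals sub n by blast
      moreover have "n + Suc L \<in> hit_UV f U V"
        by (rule hit_UV_add[of _ _ _ P]) (use sub n in \<open>auto simp: P_def\<close>)
      moreover have "{n..n + Suc L} = insert (n + Suc L) {n..n + L}" by auto
      ultimately show ?thesis by simp
    qed
    then show ?case using UV'' by blast
  qed
  then show thesis using that by blast
qed

lemma weakly_mixing_hit_UV_thick:
  assumes "weakly_mixing X f" "nonempty_open U" "nonempty_open V"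
  shows "hit_UV f U V \<in> thick_family"
  unfolding thick_family_def
proof (intro CollectI conjI allI)
  show "hit_UV f U V \<subseteq> posnat" by (rule hit_UV_subset_posnat)
  fix L
  obtain U' V' where "nonempty_open U'" "nonempty_open V'"
    and intervals: "\<And>n. n \<in> hit_UV f U' V' \<Longrightarrow> {n..n + L} \<subseteq> hit_UV f U V"
    by (rule weakly_mixing_hit_UV_intervals[OF assms, where L = L]) blast
  then obtain a where "a \<in> hit_UV f U' V'"
    using weakly_mixing_imp_transitive[OF assms(1)] unfolding top_transitive_def by blast
  then show "\<exists>a \<in> posnat. {a..a + L} \<subseteq> hit_UV f U V"
    using intervals hit_UV_subset_posnat by blast
qed

definition revisit_set :: "'a set \<Rightarrow> nat \<Rightarrow> 'a set" where
  "revisit_set B n = {x \<in> X. \<exists>d \<ge> 1. (f ^^ d) x \<in> B \<and> (f ^^ (d + n)) x \<in> B}"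

lemma openin_revisit_set:
  assumes "openin (top_of_set X) B"
  shows "openin (top_of_set X) (revisit_set B n)"
proof -
  have "revisit_set B n = (\<Union>d \<in> {1..}. {y \<in> X. (f ^^ d) y \<in> B} \<inter> {y \<in> X. (f ^^ (d + n)) y \<in> B})"
    unfolding revisit_set_def by auto
  then show ?thesis using openin_funpow_preimage[OF assms] by (auto intro!: openin_Union openin_Int)
qed

lemma revisit_set_meets_open:
  assumes "top_transitive X f" "nonempty_open B" "n \<in> hit_UV f B B" "nonempty_open T"
  shows "revisit_set B n \<inter> T \<noteq> {}"
proof -
  define V where "V = B \<inter> {y \<in> X. (f ^^ n) y \<in> B}"
  have "openin (top_of_set X) V"
    unfolding V_def using assms(2) openin_funpow_preimage by blast
  moreover have "V \<noteq> {}"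
    using assms(2,3) openin_subset[of "top_of_set X" B] unfolding V_def hit_UV_def by auto
  ultimately obtain t where "t \<in> hit_UV f T V"
    using assms(1,4) unfolding top_transitive_def by blast
  then obtain y where y: "t \<ge> 1" "y \<in> T" "(f ^^ t) y \<in> V" unfolding hit_UV_def by blast
  have "(f ^^ (t + n)) y = (f ^^ n) ((f ^^ t) y)" by (simp add: funpow_apply_funpow add.commute)
  then have "y \<in> revisit_set B n"
    using y assms(4) openin_subset[of "top_of_set X" T] unfolding revisit_set_def V_def by auto
  then show ?thesis using y(2) by blast
qed

lemma hit_UV_subset_diff_set_hit_xU:
  assumes "\<And>n. n \<in> hit_UV f B B \<Longrightarrow> x \<in> revisit_set B n" "B \<subseteq> U"
  shows "hit_UV f B B \<subseteq> diff_set (hit_xU f x U)"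
proof
  fix n assume n: "n \<in> hit_UV f B B"
  then obtain d where "d \<ge> 1" "(f ^^ d) x \<in> B" "(f ^^ (d + n)) x \<in> B"
    using assms(1) unfolding revisit_set_def by blast
  moreover have "n \<ge> 1" using n unfolding hit_UV_def by blast
  ultimately show "n \<in> diff_set (hit_xU f x U)"
    unfolding diff_set_def hit_xU_def using assms(2)
    by (intro CollectI exI[of _ "d + n"] exI[of _ d]) auto
qed

lemma transitive_point_hit_UV_subset_diff_set:
  assumes "compact X" "X \<noteq> {}" "top_transitive X f"
  obtains x where "x \<in> X"
    "\<And>U. nonempty_open U \<Longrightarrow> \<exists>B. nonempty_open B \<and> hit_UV f B B \<subseteq> diff_set (hit_xU f x U)"
proof -
  obtain \<B> where \<B>: "countable \<B>" "\<And>B. B \<in> \<B> \<Longrightarrow> nonempty_open B"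
    "\<And>U. nonempty_open U \<Longrightarrow> \<exists>B \<in> \<B>. B \<subseteq> U"
    by (rule compact_countable_pi_base[OF assms(1)]) blast
  define \<G> where "\<G> = (\<lambda>(B, n). revisit_set B n) ` (SIGMA B:\<B>. hit_UV f B B)"
  have "X \<inter> \<Inter>\<G> \<noteq> {}"
  proof (rule compact_Inter_dense_openin_nonempty[OF assms(1,2)])
    show "countable \<G>" unfolding \<G>_def using \<B>(1) by (intro countable_image countable_SIGMA) auto
    fix G assume "G \<in> \<G>"
    then obtain B n where G: "G = revisit_set B n" "B \<in> \<B>" "n \<in> hit_UV f B B"
      unfolding \<G>_def by auto
    show "openin (top_of_set X) G" using G \<B>(2) openin_revisit_set by blast
    show "G \<inter> U \<noteq> {}" if "openin (top_of_set X) U" "U \<noteq> {}" for U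
      using G \<B>(2) revisit_set_meets_open[OF assms(3)] that by blast
  qed
  then obtain x where x: "x \<in> X" "x \<in> \<Inter>\<G>" by blast
  show thesis
  proof (rule that[OF x(1)])
    fix U assume "nonempty_open U"
    then obtain B where B: "B \<in> \<B>" "B \<subseteq> U" using \<B>(3) by blast
    have "x \<in> revisit_set B n" if "n \<in> hit_UV f B B" for n
      using x(2) B(1) that unfolding \<G>_def by blast
    then have "hit_UV f B B \<subseteq> diff_set (hit_xU f x U)"
      using B(2) by (rule hit_UV_subset_diff_set_hit_xU)
    then show "\<exists>B. nonempty_open B \<and> hit_UV f B B \<subseteq> diff_set (hit_xU f x U)"
      using \<B>(2)[OF B(1)] by blast
  qed
qed

lemma nabla_point_transitiveI:
  assumes "compact X" "X \<noteq> {}" "top_transitive X f"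
    and mono: "\<And>S T. S \<in> Fam \<Longrightarrow> S \<subseteq> T \<Longrightarrow> T \<subseteq> posnat \<Longrightarrow> T \<in> Fam"
    and recurrence: "\<And>U. nonempty_open U \<Longrightarrow> hit_UV f U U \<in> Fam"
  shows "F_point_transitive X f (nabla Fam)"
proof -
  obtain x where x: "x \<in> X"
    "\<And>U. nonempty_open U \<Longrightarrow> \<exists>B. nonempty_open B \<and> hit_UV f B B \<subseteq> diff_set (hit_xU f x U)"
    by (rule transitive_point_hit_UV_subset_diff_set[OF assms(1-3)]) blast
  have "hit_xU f x U \<in> nabla Fam" if U: "nonempty_open U" for U
  proof -
    obtain B where "nonempty_open B" "hit_UV f B B \<subseteq> diff_set (hit_xU f x U)"
      using x(2)[OF U] by blast
    then have "diff_set (hit_xU f x U) \<in> Fam"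
      using recurrence mono diff_set_subset_posnat by blast
    then show ?thesis unfolding nabla_def by (simp add: hit_xU_subset_posnat)
  qed
  then show ?thesis
    unfolding F_point_transitive_def F_transitive_point_def using x(1) by blast
qed

lemma diff_set_hit_xU_translate:
  assumes "x \<in> X" "\<And>W. nonempty_open W \<Longrightarrow> infinite (hit_xU f x W)"
    and "nonempty_open U" "nonempty_open V"
  obtains W c where "openin (top_of_set X) W" "x \<in> W"
    "\<And>n. n \<in> diff_set (hit_xU f x W) \<Longrightarrow> n + c \<in> hit_UV f U V"
proof -
  have "hit_xU f x U \<noteq> {}" using assms(2)[OF assms(3)] by auto
  then obtain a where a: "a \<in> hit_xU f x U" by blast
  obtain b where b: "b \<in> hit_xU f x V" "a < b"
    using assms(2)[OF assms(4)] unfolding infinite_nat_iff_unbounded by blast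
  define W where "W = {y \<in> X. (f ^^ a) y \<in> U} \<inter> {y \<in> X. (f ^^ b) y \<in> V}"
  show thesis
  proof (rule that)
    show "openin (top_of_set X) W"
      unfolding W_def using assms(3,4) openin_funpow_preimage by blast
    show "x \<in> W" using assms(1) a b(1) unfolding W_def hit_xU_def by blast
  next
    fix n assume "n \<in> diff_set (hit_xU f x W)"
    then obtain s t where st: "n = s - t" "t < s" "(f ^^ s) x \<in> W" "(f ^^ t) x \<in> W"
      unfolding diff_set_def hit_xU_def by blast
    have "(f ^^ (n + (b - a))) ((f ^^ (a + t)) x) = (f ^^ b) ((f ^^ s) x)"
      using st(1,2) b(2) by (simp add: funpow_apply_funpow add.commute)
    moreover have "(f ^^ (a + t)) x \<in> U" using st(4) unfolding W_def by (simp add: funpow_apply_funpow)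
    moreover have "(f ^^ b) ((f ^^ s) x) \<in> V" using st(3) unfolding W_def by blast
    moreover have "n + (b - a) \<ge> 1" using st(1,2) by simp
    ultimately show "n + (b - a) \<in> hit_UV f U V"
      unfolding hit_UV_def by (auto intro!: bexI[of _ "(f ^^ (a + t)) x"])
  qed
qed

lemma weakly_mixing_if_nabla_thick_point_transitive:
  assumes "F_point_transitive X f (nabla thick_family)"
  shows "weakly_mixing X f"
proof -
  obtain x where x: "x \<in> X"
    and thick: "\<And>W. nonempty_open W \<Longrightarrow> diff_set (hit_xU f x W) \<in> thick_family"
    using assms unfolding F_point_transitive_def F_transitive_point_def nabla_def by blast
  have infinite: "infinite (hit_xU f x W)" if "nonempty_open W" for W
    using thick[OF that] thick_family_infinite finite_diff_set by blast
  show ?thesis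
  proof (rule weakly_mixingI)
    fix U1 V1 U2 V2
    assume "nonempty_open U1" "nonempty_open V1" "nonempty_open U2" "nonempty_open V2"
    obtain W1 c1 where W1: "openin (top_of_set X) W1" "x \<in> W1"
      and c1: "\<And>n. n \<in> diff_set (hit_xU f x W1) \<Longrightarrow> n + c1 \<in> hit_UV f U1 V1"
      using diff_set_hit_xU_translate[OF x infinite \<open>nonempty_open U1\<close> \<open>nonempty_open V1\<close>] by blast
    obtain W2 c2 where W2: "openin (top_of_set X) W2" "x \<in> W2"
      and c2: "\<And>n. n \<in> diff_set (hit_xU f x W2) \<Longrightarrow> n + c2 \<in> hit_UV f U2 V2"
      using diff_set_hit_xU_translate[OF x infinite \<open>nonempty_open U2\<close> \<open>nonempty_open V2\<close>] by blast
    define D where "D = diff_set (hit_xU f x (W1 \<inter> W2))"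
    have "nonempty_open (W1 \<inter> W2)" using W1 W2 by blast
    then obtain m where "m + c2 \<in> D" "m + c1 \<in> D"
      using thick unfolding D_def by (meson thick_family_common_translate)
    moreover have "D \<subseteq> diff_set (hit_xU f x W1)" "D \<subseteq> diff_set (hit_xU f x W2)"
      unfolding D_def by (simp_all add: diff_set_mono hit_xU_mono)
    ultimately have "m + c2 + c1 \<in> hit_UV f U1 V1" "m + c1 + c2 \<in> hit_UV f U2 V2"
      using c1 c2 by blast+
    moreover have "m + c1 + c2 = m + c2 + c1" by simp
    ultimately show "hit_UV f U1 V1 \<inter> hit_UV f U2 V2 \<noteq> {}" by (metis IntI empty_iff)
  qed
qed

lemma strongly_mixing_if_nabla_cofinite_point_transitive:
  assumes "F_point_transitive X f (nabla cofinite_family)"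
  shows "strongly_mixing X f"
proof -
  obtain x where x: "x \<in> X"
    and cofinite: "\<And>W. nonempty_open W \<Longrightarrow> diff_set (hit_xU f x W) \<in> cofinite_family"
    using assms unfolding F_point_transitive_def F_transitive_point_def nabla_def by blast
  have infinite: "infinite (hit_xU f x W)" if "nonempty_open W" for W
    using cofinite[OF that] cofinite_family_infinite finite_diff_set by blast
  have "hit_UV f U V \<in> cofinite_family" if UV: "nonempty_open U" "nonempty_open V" for U V
  proof -
    obtain W c where "openin (top_of_set X) W" "x \<in> W"
      and c: "\<And>n. n \<in> diff_set (hit_xU f x W) \<Longrightarrow> n + c \<in> hit_UV f U V"
      using diff_set_hit_xU_translate[OF x infinite UV] by blast
    then have "diff_set (hit_xU f x W) \<in> cofinite_family" using cofinite by blast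
    then show ?thesis using hit_UV_subset_posnat c by (rule cofinite_family_translate)
  qed
  then show ?thesis unfolding strongly_mixing_def by blast
qed

end

theorem theorem3p7:
  fixes X :: "'a::metric_space set" and f :: "'a \<Rightarrow> 'a"
  assumes "compact X" and "X \<noteq> {}"
    and "continuous_on X f" and "f ` X \<subseteq> X"
  shows "(weakly_mixing X f \<longleftrightarrow> F_point_transitive X f (nabla thick_family)) \<and>
         (strongly_mixing X f \<longleftrightarrow> F_point_transitive X f (nabla cofinite_family))"
proof -
  interpret dynamical_system X f using assms(3,4) by unfold_locales
  show ?thesis
  proof (intro conjI iffI)
    assume wm: "weakly_mixing X f"
    show "F_point_transitive X f (nabla thick_family)"
    proof (rule nabla_point_transitiveI[OF assms(1,2) weakly_mixing_imp_transitive[OF wm]])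
      show "T \<in> thick_family" if "S \<in> thick_family" "S \<subseteq> T" "T \<subseteq> posnat" for S T
        using that by (rule thick_family_mono)
      show "hit_UV f U U \<in> thick_family" if "nonempty_open U" for U
        using wm that that by (rule weakly_mixing_hit_UV_thick)
    qed
  next
    assume sm: "strongly_mixing X f"
    show "F_point_transitive X f (nabla cofinite_family)"
    proof (rule nabla_point_transitiveI[OF assms(1,2) strongly_mixing_imp_transitive[OF sm]])
      show "T \<in> cofinite_family" if "S \<in> cofinite_family" "S \<subseteq> T" "T \<subseteq> posnat" for S T
        using that by (rule cofinite_family_mono)
      show "hit_UV f U U \<in> cofinite_family" if "nonempty_open U" for U
        using sm that unfolding strongly_mixing_def by blast
    qed
  qed (simp_all add: weakly_mixing_if_nabla_thick_point_transitive
         strongly_mixing_if_nabla_cofinite_point_transitive)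
qed

end
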